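(* Let $w\in\{a,\alpha\}^*$ be such that $\varphi_w$ is primitive, let $\mathbf{u}$ be a fixed point of $\varphi_w$, and let $p\neq\varepsilon$ be a prefix of $\mathbf{u}$. Then the derived word $\mathbf{d}_{\mathbf{u}}(p)$ is fixed by a substitution from $C(F(w))\cup C(H(w))$, where $C(x) = \{\varphi_v : v=\mathrm{cyc}^k(x),\ k\in\mathbb{N}\}$.
   Context: Morphisms on $\{0,1\}^*$: $\varphi_a: 0\mapsto 0, 1 \mapsto 10$; $\varphi_b: 0 \mapsto 0, 1\mapsto 01$; $\varphi_\alpha: 0\mapsto 01, 1\mapsto 1$; $\varphi_\beta: 0\mapsto 10, 1 \mapsto 1$; for $w=w_0\cdots w_{m-1}$, $\varphi_w = \varphi_{w_0}\circ\cdots\circ\varphi_{w_{m-1}}$. $\mathrm{cyc}(u_0u_1\cdots u_{n-1}) = u_1\cdots u_{n-1}u_0$. $H, F$ are monoid morphisms on $\{a,b,\alpha,\beta\}^*$: $H(a)=H(b)=b$, $H(\alpha)=\alpha$, $H(\beta)=\beta$; $F(a)=a$, $F(b)=b$, $F(\alpha)=F(\beta)=\beta$. A morphism is primitive if some power maps every letter to a word containing every letter. Derived word: for a uniformly recurrent word $\mathbf{u}$ and factor $v$, a return word of $v$ is a factor $r$ such that $rv$ is a factor in which $v$ occurs exactly twice (as prefix and suffix); with $r_0,\dots,r_k$ all return words and $\mathbf{u}=p'\,r_{s_0}r_{s_1}\cdots$, $|p'|$ the first occurrence of $v$, $\mathbf{d}_{\mathbf{u}}(v)=s_0s_1\cdots$,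 up to permutation of letters. *)

theory Defs
  imports Main "HOL-Library.Infinite_Set"
begin

datatype gen = GA | GB | GAl | GBe

fun phi_gen :: "gen \<Rightarrow> nat \<Rightarrow> nat list" where
  "phi_gen GA c = (if c = 0 then [0] else [1,0])"
| "phi_gen GB c = (if c = 0 then [0] else [0,1])"
| "phi_gen GAl c = (if c = 0 then [0,1] else [1])"
| "phi_gen GBe c = (if c = 0 then [1,0] else [1])"

definition morph :: "(nat \<Rightarrow> nat list) \<Rightarrow> nat list \<Rightarrow> nat list" where
  "morph f xs = concat (map f xs)"

fun phi_word :: "gen list \<Rightarrow> nat \<Rightarrow> nat list" where
  "phi_word [] c = [c]"
| "phi_word (g # ws) c = morph (phi_gen g) (phi_word ws c)"

definition H :: "gen \<Rightarrow> gen" where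
  "H g = (case g of GA \<Rightarrow> GB | GB \<Rightarrow> GB | GAl \<Rightarrow> GAl | GBe \<Rightarrow> GBe)"

definition F :: "gen \<Rightarrow> gen" where
  "F g = (case g of GA \<Rightarrow> GA | GB \<Rightarrow> GB | GAl \<Rightarrow> GBe | GBe \<Rightarrow> GBe)"

definition cyc :: "'a list \<Rightarrow> 'a list" where
  "cyc xs = rotate1 xs"

definition primitive :: "(nat \<Rightarrow> nat list) \<Rightarrow> bool" where
  "primitive f \<longleftrightarrow> (\<exists>k>0. \<forall>c\<in>{0,1::nat}. \<forall>d\<in>{0,1::nat}.
      d \<in> set (((morph f) ^^ k) [c]))"

definition pref :: "(nat \<Rightarrow> 'a) \<Rightarrow> nat \<Rightarrow> 'a list" where
  "pref u n = map u [0..<n]"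

text \<open>u is a fixed point of the (non-erasing) morphism f on {0,1}^N:
  u is binary and f(u) = u, i.e. every f(u_0...u_{n-1}) is a prefix of u.\<close>
definition fixed_point :: "(nat \<Rightarrow> nat list) \<Rightarrow> (nat \<Rightarrow> nat) \<Rightarrow> bool" where
  "fixed_point f u \<longleftrightarrow> range u \<subseteq> {0,1} \<and>
     (\<forall>n. let v = morph f (pref u n) in v = pref u (length v))"

definition occurrences :: "(nat \<Rightarrow> nat) \<Rightarrow> nat list \<Rightarrow> nat set" where
  "occurrences u v = {i. \<forall>j<length v. u (i + j) = v ! j}"

definition return_seq :: "(nat \<Rightarrow> nat) \<Rightarrow> nat list \<Rightarrow> nat \<Rightarrow> nat list" where
  "return_seq u v n = map u [enumerate (occurrences u v) n ..< enumerate (occurrences u v) (Suc n)]"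

text \<open>The derived word (defined up to permutation of letters) is fixed by f iff
  some injective coding of the return words into {0,1} turns the sequence of
  return words into a fixed point of f.\<close>
definition derived_fixed_by :: "(nat \<Rightarrow> nat) \<Rightarrow> nat list \<Rightarrow> (nat \<Rightarrow> nat list) \<Rightarrow> bool" where
  "derived_fixed_by u v f \<longleftrightarrow>
     (\<exists>\<sigma> :: nat list \<Rightarrow> nat. inj_on \<sigma> (range (return_seq u v)) \<and>
        fixed_point f (\<lambda>n. \<sigma> (return_seq u v n)))"

definition Cset :: "gen list \<Rightarrow> (nat \<Rightarrow> nat list) set" where
  "Cset x = {phi_word v | v. \<exists>k::nat. v = (cyc ^^ k) x}"

end

theory Submission
  imports Defs
begin

text \<open>Let \<open>\<phi>\<^sub>w\<close> fix \<open>u\<close> and write \<open>w = g v\<close>. Then \<open>u = \<phi>\<^sub>g(u')\<close> for \<open>u' = \<phi>\<^sub>v(u)\<close>,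
  which is fixed by \<open>\<phi>\<^sub>v \<circ> \<phi>\<^sub>g\<close>, the morphism of \<open>cyc w\<close>. Each \<open>\<phi>\<^sub>g\<close> maps one letter to
  a letter and the other one to a two-letter word starting with a letter \<open>marker g\<close>, so
  \<open>marker g\<close> occurs in \<open>\<phi>\<^sub>g(u')\<close> only at block starts. Hence, if \<open>p\<close> starts with
  \<open>marker g\<close>, the occurrences of \<open>p\<close> in \<open>u\<close> are the images of the occurrences of a prefix
  \<open>p'\<close> of \<open>u'\<close> with \<open>|p'| \<le> |p|\<close>. Since \<open>\<phi>\<^sub>g\<close> is injective, the return words of \<open>p\<close> are
  the images of those of \<open>p'\<close>, and the two derived sequences coincide. Desubstituting until
  the prefix is empty, where the derived sequence is the fixed point itself, shows that the
  derived sequence is fixed by a cyclic shift of \<open>w\<close>.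

  For \<open>w \<in> {a, \<alpha>}\<^sup>*\<close> the first letter \<open>c\<close> of \<open>u\<close> is kept, and this works while the
  current generator has marker \<open>c\<close>. At the first generator with marker \<open>1 - c\<close> (one exists
  by primitivity), deleting the leading \<open>c\<close> replaces each generator with marker \<open>c\<close> by its
  conjugate: \<open>a\<close> by \<open>b\<close> if \<open>c = 1\<close>, \<open>\<alpha>\<close> by \<open>\<beta>\<close> if \<open>c = 0\<close>, turning \<open>w\<close> into \<open>H(w)\<close> or
  \<open>F(w)\<close>. Now all generators share one marker, which is then the first letter of the fixed
  point, so desubstitution always applies, and the prefix shrinks strictly at each \<open>b\<close> or
  \<open>\<beta>\<close>.\<close>

section \<open>Words, morphisms and images of infinite words\<close>

lemma morph_Nil [simp]: "morph f [] = []"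
  by (simp add: morph_def)

lemma morph_Cons [simp]: "morph f (c # l) = f c @ morph f l"
  by (simp add: morph_def)

lemma morph_append [simp]: "morph f (l1 @ l2) = morph f l1 @ morph f l2"
  by (simp add: morph_def)

lemma morph_morph: "morph g (morph f l) = morph (\<lambda>c. morph g (f c)) l"
  by (induct l) auto

lemma morph_singleton_id [simp]: "morph (\<lambda>c. [c]) l = l"
  by (induct l) auto

lemma set_morph: "a \<in> set (morph f l) \<Longrightarrow> \<exists>c\<in>set l. a \<in> set (f c)"
  by (induct l) auto

definition nonerasing :: "(nat \<Rightarrow> nat list) \<Rightarrow> bool" where
  "nonerasing f \<longleftrightarrow> (\<forall>c. f c \<noteq> [])"

lemma length_le_length_morph: "nonerasing f \<Longrightarrow> length l \<le> length (morph f l)"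
proof (induct l)
  case (Cons c l)
  then have "f c \<noteq> []" by (auto simp: nonerasing_def)
  then show ?case using Cons by (cases "f c") auto
qed simp

lemma nth_morph_0: "l \<noteq> [] \<Longrightarrow> f (l ! 0) \<noteq> [] \<Longrightarrow> morph f l ! 0 = f (l ! 0) ! 0"
  by (cases l) (auto simp: nth_append)

lemma pref_0 [simp]: "pref x 0 = []"
  by (simp add: pref_def)

lemma pref_Suc: "pref x (Suc n) = pref x n @ [x n]"
  by (simp add: pref_def)

lemma length_pref [simp]: "length (pref x n) = n"
  by (simp add: pref_def)

lemma nth_pref [simp]: "k < n \<Longrightarrow> pref x n ! k = x k"
  by (simp add: pref_def)

lemma pref_le: "a \<le> b \<Longrightarrow> pref x b = pref x a @ map x [a..<b]"
  unfolding pref_def using upt_add_eq_append[of 0 a "b - a"] by simp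

lemma pref_eq_iff: "pref x n = l \<longleftrightarrow> length l = n \<and> (\<forall>k<n. x k = l ! k)"
  by (auto simp: pref_def list_eq_iff_nth_eq)

lemma take_pref: "k \<le> n \<Longrightarrow> take k (pref x n) = pref x k"
  by (simp add: pref_def take_map)

lemma pref_Suc_Cons: "pref x (Suc n) = x 0 # pref (\<lambda>k. x (Suc k)) n"
  by (induct n) (auto simp: pref_Suc)

lemma pref_eq_appendD: "pref y n = A @ B \<Longrightarrow> pref y (length A) = A"
  by (metis append_eq_conv_conj length_append length_pref le_add1 take_pref)

lemma phi_word_Nil_eq: "phi_word [] = (\<lambda>c. [c])"
  by (rule ext) simp

lemma phi_word_Cons_eq: "phi_word (g # v) = (\<lambda>c. morph (phi_gen g) (phi_word v c))"
  by (rule ext) simp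

lemma phi_word_snoc: "phi_word (v @ [g]) c = morph (phi_word v) (phi_gen g c)"
  by (induct v arbitrary: c) (simp_all add: morph_morph phi_word_Nil_eq phi_word_Cons_eq)

definition is_image :: "(nat \<Rightarrow> nat list) \<Rightarrow> (nat \<Rightarrow> nat) \<Rightarrow> (nat \<Rightarrow> nat) \<Rightarrow> bool" where
  "is_image f x y \<longleftrightarrow> (\<forall>j. morph f (pref x j) = pref y (length (morph f (pref x j))))"

definition image_word :: "(nat \<Rightarrow> nat list) \<Rightarrow> (nat \<Rightarrow> nat) \<Rightarrow> nat \<Rightarrow> nat" where
  "image_word f x n = morph f (pref x (Suc n)) ! n"

definition binary :: "(nat \<Rightarrow> nat) \<Rightarrow> bool" where
  "binary x \<longleftrightarrow> (\<forall>n. x n \<le> 1)"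

lemma set_pref_binary: "binary x \<Longrightarrow> set (pref x n) \<subseteq> {..1}"
  by (auto simp: pref_def binary_def)

lemma fixed_point_iff: "fixed_point f x \<longleftrightarrow> binary x \<and> is_image f x x"
  unfolding fixed_point_def is_image_def binary_def Let_def
  by (auto simp: image_subset_iff) (metis le_Suc_eq le_zero_eq insert_iff singletonD)+

lemma is_image_pref: "is_image f x y \<Longrightarrow> morph f (pref x j) = pref y (length (morph f (pref x j)))"
  by (simp add: is_image_def)

lemma is_image_unique:
  assumes "is_image f x y" "is_image f x z" "nonerasing f"
  shows "y = z"
proof
  fix n
  let ?L = "length (morph f (pref x (Suc n)))"
  have "Suc n \<le> ?L" using length_le_length_morph[OF assms(3), of "pref x (Suc n)"] by simp
  moreover have "pref y ?L = pref z ?L"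
    using is_image_pref[OF assms(1)] is_image_pref[OF assms(2)] by metis
  ultimately show "y n = z n" by (metis Suc_le_lessD nth_pref)
qed

lemma is_image_image_word:
  assumes "nonerasing f"
  shows "is_image f x (image_word f x)"
  unfolding is_image_def
proof
  fix j
  have prefix_stable: "morph f (pref x b) ! k = morph f (pref x a) ! k"
    if "k < length (morph f (pref x a))" "a \<le> b" for a b k
    using that pref_le[of a b x] by (simp add: nth_append)
  have "pref (image_word f x) (length (morph f (pref x j))) = morph f (pref x j)"
    unfolding pref_eq_iff
  proof (intro conjI allI impI refl)
    fix k assume k: "k < length (morph f (pref x j))"
    have "k < length (morph f (pref x (Suc k)))"
      using length_le_length_morph[OF assms, of "pref x (Suc k)"] by simp
    then show "image_word f x k = morph f (pref x j) ! k"
      unfolding image_word_def using k prefix_stable by (cases "Suc k \<le> j") (metis nat_le_linear)+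
  qed
  then show "morph f (pref x j) = pref (image_word f x) (length (morph f (pref x j)))" by simp
qed

lemma is_image_comp:
  assumes "is_image f x y" "is_image g y z"
  shows "is_image (\<lambda>c. morph g (f c)) x z"
  unfolding is_image_def
proof
  fix j
  have "morph (\<lambda>c. morph g (f c)) (pref x j) = morph g (pref y (length (morph f (pref x j))))"
    using is_image_pref[OF assms(1)] by (metis morph_morph)
  also have "\<dots> = pref z (length (morph (\<lambda>c. morph g (f c)) (pref x j)))"
    using is_image_pref[OF assms(2)] is_image_pref[OF assms(1)] by (metis morph_morph)
  finally show "morph (\<lambda>c. morph g (f c)) (pref x j)
      = pref z (length (morph (\<lambda>c. morph g (f c)) (pref x j)))" .
qed

lemma is_image_id_iff: "is_image (\<lambda>c. [c]) x y \<longleftrightarrow> y = x"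
  by (auto simp: is_image_def pref_eq_iff fun_eq_iff) (metis lessI)

lemma hd_is_image: "is_image f x y \<Longrightarrow> nonerasing f \<Longrightarrow> y 0 = f (x 0) ! 0"
  using is_image_pref[of f x y 1]
  by (simp add: pref_Suc nonerasing_def) (metis length_greater_0_conv nth_pref)

lemma binary_image_word:
  assumes "binary x" "\<And>c a. c \<le> 1 \<Longrightarrow> a \<in> set (f c) \<Longrightarrow> a \<le> 1" "nonerasing f"
  shows "binary (image_word f x)"
  unfolding binary_def image_word_def
proof
  fix n
  have "n < length (morph f (pref x (Suc n)))"
    using length_le_length_morph[OF assms(3), of "pref x (Suc n)"] by simp
  then obtain c where "c \<in> set (pref x (Suc n))" "morph f (pref x (Suc n)) ! n \<in> set (f c)"
    using set_morph nth_mem by metis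
  moreover have "c \<le> 1" using calculation(1) assms(1) by (auto simp: pref_def binary_def)
  ultimately show "morph f (pref x (Suc n)) ! n \<le> 1" using assms(2) by blast
qed

definition block_start :: "(nat \<Rightarrow> nat list) \<Rightarrow> (nat \<Rightarrow> nat) \<Rightarrow> nat \<Rightarrow> nat" where
  "block_start f x j = length (morph f (pref x j))"

lemma block_start_0 [simp]: "block_start f x 0 = 0"
  by (simp add: block_start_def)

lemma block_start_Suc: "block_start f x (Suc j) = block_start f x j + length (f (x j))"
  by (simp add: block_start_def pref_Suc)

lemma block_start_less_Suc: "nonerasing f \<Longrightarrow> block_start f x j < block_start f x (Suc j)"
  by (simp add: block_start_Suc nonerasing_def)

lemma strict_mono_block_start: "nonerasing f \<Longrightarrow> strict_mono (block_start f x)"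
  by (simp add: strict_mono_Suc_iff block_start_less_Suc)

lemma pref_block_start: "is_image f x y \<Longrightarrow> pref y (block_start f x j) = morph f (pref x j)"
  by (metis block_start_def is_image_pref)

lemma is_image_nth_block:
  assumes "is_image f x y" "i < length (f (x j))"
  shows "y (block_start f x j + i) = f (x j) ! i"
proof -
  have "pref y (block_start f x (Suc j)) = morph f (pref x j) @ f (x j)"
    using pref_block_start[OF assms(1), of "Suc j"] by (simp add: pref_Suc)
  moreover have "block_start f x j + i < block_start f x (Suc j)"
    using assms(2) by (simp add: block_start_Suc)
  ultimately show ?thesis by (metis block_start_def nth_append_length_plus nth_pref)
qed

lemma obtain_block:
  assumes "nonerasing f"
  obtains j where "block_start f x j \<le> i" "i < block_start f x (Suc j)"
proof -
  have "\<exists>j. block_start f x j \<le> i \<and> i < block_start f x (Suc j)"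
  proof (induct i)
    case 0
    show ?case using block_start_less_Suc[OF assms, of x 0] by (intro exI[of _ 0]) simp
  next
    case (Suc i)
    then obtain j where j: "block_start f x j \<le> i" "i < block_start f x (Suc j)" by blast
    show ?case
    proof (cases "Suc i < block_start f x (Suc j)")
      case True
      then show ?thesis using j by (intro exI[of _ j]) simp
    next
      case False
      then show ?thesis
        using j block_start_less_Suc[OF assms, of x "Suc j"] by (intro exI[of _ "Suc j"]) simp
    qed
  qed
  then show ?thesis using that by blast
qed

lemma map_block_start_interval:
  assumes "is_image f x y" "a \<le> b"
  shows "map y [block_start f x a..<block_start f x b] = morph f (map x [a..<b])"
proof -
  have ab: "block_start f x a \<le> block_start f x b"
    using assms(2) pref_le[of a b x] by (simp add: block_start_def)
  have "map y [block_start f x a..<block_start f x b]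
      = drop (block_start f x a) (pref y (block_start f x b))"
    using pref_le[OF ab, of y] by simp
  also have "\<dots> = drop (block_start f x a) (morph f (pref x a) @ morph f (map x [a..<b]))"
    using pref_block_start[OF assms(1), of b] pref_le[OF assms(2), of x] by simp
  also have "\<dots> = morph f (map x [a..<b])" by (simp add: block_start_def)
  finally show ?thesis .
qed

lemma pref_image_decomposition:
  assumes "is_image f x y" "nonerasing f"
  obtains j q where "q < length (f (x j))" "pref y n = morph f (pref x j) @ take q (f (x j))"
proof -
  obtain j where j: "block_start f x j \<le> n" "n < block_start f x (Suc j)"
    using obtain_block[OF assms(2)] .
  define q where "q = n - block_start f x j"
  have "pref y n = take n (pref y (block_start f x (Suc j)))"
    using j take_pref[of n "block_start f x (Suc j)" y] by simp
  also have "\<dots> = take n (morph f (pref x j) @ f (x j))"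
    using pref_block_start[OF assms(1), of "Suc j"] by (simp add: pref_Suc)
  also have "\<dots> = morph f (pref x j) @ take q (f (x j))"
    using j by (simp add: q_def block_start_def)
  finally have "pref y n = morph f (pref x j) @ take q (f (x j))" .
  moreover have "q < length (f (x j))" using j by (simp add: q_def block_start_Suc)
  ultimately show ?thesis using that by blast
qed

section \<open>Occurrences and return words\<close>

lemma mem_occurrences_iff: "i \<in> occurrences x s \<longleftrightarrow> (\<forall>k<length s. x (i + k) = s ! k)"
  by (simp add: occurrences_def)

lemma occurrences_Nil [simp]: "occurrences x [] = UNIV"
  by (simp add: occurrences_def)

lemma occurrences_append:
  "i \<in> occurrences x (l1 @ l2) \<longleftrightarrow> i \<in> occurrences x l1 \<and> i + length l1 \<in> occurrences x l2"
  unfolding mem_occurrences_iff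
proof safe
  fix k assume "\<forall>k<length (l1 @ l2). x (i + k) = (l1 @ l2) ! k" "k < length l2"
  then show "x (i + length l1 + k) = l2 ! k"
    by (metis add.assoc length_append nat_add_left_cancel_less nth_append_length_plus)
next
  fix k assume "\<forall>k<length (l1 @ l2). x (i + k) = (l1 @ l2) ! k" "k < length l1"
  then show "x (i + k) = l1 ! k" by (metis length_append nth_append trans_less_add1)
next
  fix k assume "\<forall>k<length l1. x (i + k) = l1 ! k" "\<forall>k<length l2. x (i + length l1 + k) = l2 ! k"
    "k < length (l1 @ l2)"
  then show "x (i + k) = (l1 @ l2) ! k"
    by (cases "k < length l1") (auto simp: nth_append dest: spec[of _ "k - length l1"])
qed

lemma occurrences_Cons: "i \<in> occurrences x (c # l) \<longleftrightarrow> x i = c \<and> Suc i \<in> occurrences x l"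
  using occurrences_append[of i x "[c]" l] by (simp add: mem_occurrences_iff)

lemma block_start_in_occurrences: "is_image f x y \<Longrightarrow> block_start f x j \<in> occurrences y (f (x j))"
  by (simp add: mem_occurrences_iff is_image_nth_block)

lemma occurrences_snoc_forced:
  assumes "p \<noteq> []" "\<And>i. x i = last p \<Longrightarrow> x (Suc i) = e"
  shows "occurrences x (p @ [e]) = occurrences x p"
proof safe
  fix i assume "i \<in> occurrences x (p @ [e])"
  then show "i \<in> occurrences x p" by (simp add: occurrences_append)
next
  fix i assume i: "i \<in> occurrences x p"
  have "x (i + (length p - 1)) = p ! (length p - 1)"
    using i assms(1) by (simp add: mem_occurrences_iff)
  then have "x (Suc (i + (length p - 1))) = e" using assms by (simp add: last_conv_nth)
  then have "x (i + length p) = e" using assms(1) by (cases p) auto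
  then show "i \<in> occurrences x (p @ [e])" using i by (simp add: occurrences_append occurrences_Cons)
qed

lemma strict_mono_range_eq:
  fixes f g :: "nat \<Rightarrow> nat"
  assumes f: "strict_mono f" and g: "strict_mono g" and r: "range f = range g"
  shows "f = g"
proof
  have le: "g n \<le> f n" if sf: "strict_mono f" and sg: "strict_mono g" and r: "range f = range g"
      and less: "\<And>m. m < n \<Longrightarrow> f m = g m" for f g :: "nat \<Rightarrow> nat" and n
  proof -
    obtain m where m: "f n = g m" using r by (metis rangeI imageE)
    have "\<not> m < n"
    proof
      assume "m < n"
      then have "f m = f n" using less m by simp
      then show False using \<open>m < n\<close> strict_mono_eq[OF sf] by simp
    qed
    then show "g n \<le> f n" using m strict_mono_less_eq[OF sg] by simp
  qed
  fix n show "f n = g n"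
  proof (induct n rule: less_induct)
    case (less n)
    then show ?case using le[OF f g r, of n] le[OF g f r[symmetric], of n] by fastforce
  qed
qed

lemma enumerate_strict_mono_image:
  fixes f :: "nat \<Rightarrow> nat"
  assumes f: "strict_mono f" and S: "infinite S"
  shows "enumerate (f ` S) = f \<circ> enumerate S"
proof (rule strict_mono_range_eq)
  have fS: "infinite (f ` S)"
    using S finite_imageD strict_mono_imp_inj_on[OF f] by (metis inj_on_subset subset_UNIV)
  show "strict_mono (enumerate (f ` S))" using strict_mono_enumerate[OF fS] .
  show "strict_mono (f \<circ> enumerate S)"
    using strict_mono_enumerate[OF S] f by (simp add: strict_mono_def)
  show "range (enumerate (f ` S)) = range (f \<circ> enumerate S)"
    using range_enumerate[OF fS] range_enumerate[OF S] by (metis image_comp)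
qed

lemma enumerate_UNIV_nat: "enumerate (UNIV :: nat set) = id"
  by (rule strict_mono_range_eq) (auto simp: strict_mono_enumerate range_enumerate strict_mono_def)

text \<open>Up to a renaming of letters, \<open>z\<close> is the derived sequence \<open>d\<^sub>x(p)\<close>.\<close>

definition codes_derived :: "(nat \<Rightarrow> nat) \<Rightarrow> nat list \<Rightarrow> (nat \<Rightarrow> nat) \<Rightarrow> bool" where
  "codes_derived x p z \<longleftrightarrow> infinite (occurrences x p) \<and>
     (\<forall>n m. return_seq x p n = return_seq x p m \<longleftrightarrow> z n = z m)"

lemma codes_derived_Nil: "codes_derived x [] x"
  unfolding codes_derived_def return_seq_def by (simp add: enumerate_UNIV_nat)

definition inj_on_binary :: "(nat \<Rightarrow> nat list) \<Rightarrow> bool" where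
  "inj_on_binary f \<longleftrightarrow> (\<forall>l1 l2. set l1 \<subseteq> {..1} \<longrightarrow> set l2 \<subseteq> {..1} \<longrightarrow>
     morph f l1 = morph f l2 \<longrightarrow> l1 = l2)"

text \<open>The return words of \<open>p\<close> in \<open>f(x)\<close> are the \<open>f\<close>-images of those of \<open>p'\<close> in \<open>x\<close>.\<close>

lemma codes_derived_image:
  assumes im: "is_image f x y" and "nonerasing f" "inj_on_binary f" "binary x"
    and occ: "occurrences y p = block_start f x ` occurrences x p'"
    and codes: "codes_derived x p' z"
  shows "codes_derived y p z"
proof -
  have inf: "infinite (occurrences x p')" using codes by (simp add: codes_derived_def)
  have sm: "strict_mono (block_start f x)" using strict_mono_block_start[OF assms(2)] .
  have inf_y: "infinite (occurrences y p)" unfolding occ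
    using inf strict_mono_imp_inj_on[OF sm] finite_imageD by (metis inj_on_subset subset_UNIV)
  have en: "enumerate (occurrences y p) = block_start f x \<circ> enumerate (occurrences x p')"
    unfolding occ by (rule enumerate_strict_mono_image[OF sm inf])
  have ret: "return_seq y p n = morph f (return_seq x p' n)" for n
    unfolding return_seq_def en
    using map_block_start_interval[OF im, of "enumerate (occurrences x p') n"
        "enumerate (occurrences x p') (Suc n)"] enumerate_mono[OF lessI inf, of n]
    by simp
  have "set (return_seq x p' n) \<subseteq> {..1}" for n
    using assms(4) by (auto simp: return_seq_def binary_def)
  then have "return_seq y p n = return_seq y p m \<longleftrightarrow> return_seq x p' n = return_seq x p' m"
    for n m
    unfolding ret using assms(3) unfolding inj_on_binary_def by metis
  then show ?thesis using codes inf_y by (simp add: codes_derived_def)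
qed


section \<open>The four elementary morphisms\<close>

text \<open>The image of a letter under \<open>\<phi>\<^sub>g\<close> is either one letter or the two-letter word starting
  with \<open>marker g\<close>, so in \<open>\<phi>\<^sub>g(x)\<close> the letter \<open>marker g\<close> only occurs at block starts.\<close>

definition marker :: "gen \<Rightarrow> nat" where
  "marker g = (case g of GA \<Rightarrow> 1 | GAl \<Rightarrow> 0 | GB \<Rightarrow> 0 | GBe \<Rightarrow> 1)"

definition head_preserving :: "gen \<Rightarrow> bool" where
  "head_preserving g \<longleftrightarrow> g = GA \<or> g = GAl"

definition conj_gen :: "gen \<Rightarrow> gen" where
  "conj_gen g = (case g of GA \<Rightarrow> GB | GAl \<Rightarrow> GBe | GB \<Rightarrow> GB | GBe \<Rightarrow> GBe)"

lemma marker_le_1: "marker g \<le> 1"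
  by (cases g) (auto simp: marker_def)

lemma marker_conj_gen: "head_preserving g \<Longrightarrow> marker (conj_gen g) = 1 - marker g"
  by (cases g) (auto simp: marker_def head_preserving_def conj_gen_def)

lemma not_head_preserving_conj_gen: "\<not> head_preserving (conj_gen g)"
  by (cases g) (auto simp: head_preserving_def conj_gen_def)

lemma obtain_conj_gen:
  assumes "\<not> head_preserving g"
  obtains g0 where "head_preserving g0" "g = conj_gen g0"
  using assms that[of GA] that[of GAl] by (cases g) (auto simp: head_preserving_def conj_gen_def)

lemma phi_gen_ne_Nil: "phi_gen g c \<noteq> []"
  by (cases g) auto

lemma nonerasing_phi_gen: "nonerasing (phi_gen g)"
  by (simp add: nonerasing_def phi_gen_ne_Nil)

lemma phi_gen_binary: "a \<in> set (phi_gen g c) \<Longrightarrow> a \<le> 1"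
  by (cases g) (auto split: if_splits)

lemma hd_phi_gen: "c \<le> 1 \<Longrightarrow> phi_gen g c ! 0 = (if head_preserving g then c else marker g)"
  by (cases g) (auto simp: head_preserving_def marker_def)

lemma length_phi_gen:
  "c \<le> 1 \<Longrightarrow> length (phi_gen g c) = (if head_preserving g = (c = marker g) then 2 else 1)"
  by (cases g) (auto simp: head_preserving_def marker_def)

lemma length_phi_gen_le_2: "length (phi_gen g c) \<le> 2"
  by (cases g) auto

lemma phi_gen_length_2: "length (phi_gen g c) = 2 \<Longrightarrow> phi_gen g c = [marker g, 1 - marker g]"
  by (cases g) (auto simp: marker_def split: if_splits)

lemma phi_gen_length_1:
  "c \<le> 1 \<Longrightarrow> length (phi_gen g c) = 1 \<Longrightarrow> phi_gen g c = [if head_preserving g then c else marker g]"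
  by (cases g) (auto simp: head_preserving_def marker_def split: if_splits)

lemma morph_conj_gen_snoc:
  assumes "head_preserving g"
  shows "morph (phi_gen (conj_gen g)) l @ [1 - marker g] = (1 - marker g) # morph (phi_gen g) l"
proof (induct l)
  case (Cons c l)
  have "phi_gen (conj_gen g) c @ [1 - marker g] = (1 - marker g) # phi_gen g c"
    using assms by (cases g) (auto simp: head_preserving_def conj_gen_def marker_def)
  moreover have "morph (phi_gen (conj_gen g)) (c # l) @ [1 - marker g]
      = (phi_gen (conj_gen g) c @ [1 - marker g]) @ morph (phi_gen g) l"
    using Cons by simp
  ultimately show ?case by simp
qed simp

lemma morph_phi_gen_ne_Nil: "l \<noteq> [] \<Longrightarrow> morph (phi_gen g) l \<noteq> []"
  by (cases l) (auto simp: phi_gen_ne_Nil)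

lemma inj_on_binary_phi_gen_head_preserving:
  assumes "head_preserving g"
  shows "inj_on_binary (phi_gen g)"
  unfolding inj_on_binary_def
proof (intro allI impI)
  fix l1 l2 :: "nat list"
  assume "set l1 \<subseteq> {..1}" "set l2 \<subseteq> {..1}" "morph (phi_gen g) l1 = morph (phi_gen g) l2"
  then show "l1 = l2"
  proof (induct l1 arbitrary: l2)
    case Nil
    then show ?case using morph_phi_gen_ne_Nil[of l2 g] by fastforce
  next
    case (Cons c l1)
    obtain c' l2' where l2: "l2 = c' # l2'"
      using Cons.prems(3) morph_phi_gen_ne_Nil[of "c # l1" g] by (cases l2) auto
    have c: "c \<le> 1" "c' \<le> 1" using Cons.prems(1,2) l2 by auto
    have "(phi_gen g c @ morph (phi_gen g) l1) ! 0 = (phi_gen g c' @ morph (phi_gen g) l2') ! 0"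
      using Cons.prems(3) l2 by simp
    then have "phi_gen g c ! 0 = phi_gen g c' ! 0"
      using phi_gen_ne_Nil[of g c] phi_gen_ne_Nil[of g c'] by (simp add: nth_append)
    then have "c = c'" using hd_phi_gen[OF c(1), of g] hd_phi_gen[OF c(2), of g] assms by simp
    then show ?case using Cons l2 by simp
  qed
qed

text \<open>\<open>\<phi>\<^sub>b\<close> and \<open>\<phi>\<^sub>\<beta>\<close> are injective since they agree with \<open>\<phi>\<^sub>a\<close>, \<open>\<phi>\<^sub>\<alpha>\<close> up to a shift.\<close>

lemma inj_on_binary_phi_gen: "inj_on_binary (phi_gen g)"
proof (cases "head_preserving g")
  case False
  then obtain g0 where g0: "head_preserving g0" "g = conj_gen g0" by (rule obtain_conj_gen)
  have "morph (phi_gen g0) l1 = morph (phi_gen g0) l2"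
    if "morph (phi_gen g) l1 = morph (phi_gen g) l2" for l1 l2
  proof -
    have "(1 - marker g0) # morph (phi_gen g0) l1 = morph (phi_gen g) l1 @ [1 - marker g0]"
      unfolding g0(2) by (rule morph_conj_gen_snoc[OF g0(1), symmetric])
    also have "\<dots> = morph (phi_gen g) l2 @ [1 - marker g0]"
      by (simp only: that)
    also have "\<dots> = (1 - marker g0) # morph (phi_gen g0) l2"
      unfolding g0(2) by (rule morph_conj_gen_snoc[OF g0(1)])
    finally show ?thesis by simp
  qed
  then show ?thesis
    using inj_on_binary_phi_gen_head_preserving[OF g0(1)] unfolding inj_on_binary_def by blast
qed (rule inj_on_binary_phi_gen_head_preserving)


section \<open>Desubstitution through one elementary morphism\<close>

locale gen_image =
  fixes g :: gen and x' x :: "nat \<Rightarrow> nat"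
  assumes image: "is_image (phi_gen g) x' x" and binary: "binary x'"
begin

abbreviation bstart :: "nat \<Rightarrow> nat" where
  "bstart \<equiv> block_start (phi_gen g) x'"

lemma letter_le_1: "x' j \<le> 1"
  using binary by (simp add: binary_def)

lemma obtain_position:
  obtains j q where "i = bstart j + q" "q < length (phi_gen g (x' j))" "x i = phi_gen g (x' j) ! q"
proof -
  obtain j where j: "bstart j \<le> i" "i < bstart (Suc j)" using obtain_block[OF nonerasing_phi_gen] .
  then have "i = bstart j + (i - bstart j)" "i - bstart j < length (phi_gen g (x' j))"
    by (auto simp: block_start_Suc)
  then show ?thesis using that is_image_nth_block[OF image] by metis
qed

lemma letter_at_block_start: "x (bstart j) = (if head_preserving g then x' j else marker g)"
  using is_image_nth_block[OF image, of 0 j] hd_phi_gen[OF letter_le_1, of g j]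
    phi_gen_ne_Nil[of g "x' j"]
  by simp

lemma letter_inside_block:
  assumes "i = bstart j + q" "q < length (phi_gen g (x' j))" "0 < q"
  shows "x i = 1 - marker g" "q = 1" "length (phi_gen g (x' j)) = 2"
proof -
  show two: "length (phi_gen g (x' j)) = 2" using assms(2,3) length_phi_gen_le_2[of g "x' j"] by linarith
  show "q = 1" using assms(2,3) two by simp
  then show "x i = 1 - marker g"
    using is_image_nth_block[OF image, of q j] assms(1,2) phi_gen_length_2[OF two] by simp
qed

lemma marker_at_block_start: "x i = marker g \<Longrightarrow> i \<in> range bstart"
proof (rule obtain_position[of i])
  fix j q assume marker: "x i = marker g" and pos: "i = bstart j + q" "q < length (phi_gen g (x' j))"
  show ?thesis
  proof (cases "q = 0")
    case False
    then have "x i = 1 - marker g" using letter_inside_block[OF pos] by simp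
    then show ?thesis using marker marker_le_1[of g] by arith
  qed (use pos in simp)
qed

lemma marker_followed_by_other:
  assumes "head_preserving g" "x i = marker g"
  shows "x (Suc i) = 1 - marker g"
proof -
  obtain j where j: "i = bstart j" using marker_at_block_start[OF assms(2)] by blast
  then have "x' j = marker g" using letter_at_block_start[of j] assms by simp
  then have "phi_gen g (x' j) = [marker g, 1 - marker g]"
    using length_phi_gen[of "marker g" g] marker_le_1[of g] assms(1) phi_gen_length_2 by simp
  then show ?thesis using is_image_nth_block[OF image, of 1 j] j by simp
qed

lemma other_followed_by_marker:
  assumes "\<not> head_preserving g" "x i = 1 - marker g"
  shows "x (Suc i) = marker g"
proof (rule obtain_position[of i])
  fix j q assume pos: "i = bstart j + q" "q < length (phi_gen g (x' j))"
  have "q \<noteq> 0"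
  proof
    assume "q = 0"
    then have "x i = marker g" using letter_at_block_start[of j] pos(1) assms(1) by simp
    then show False using assms(2) marker_le_1[of g] by arith
  qed
  then have "Suc i = bstart (Suc j)"
    using letter_inside_block[OF pos] pos(1) by (simp add: block_start_Suc)
  then show ?thesis using letter_at_block_start[of "Suc j"] assms(1) by simp
qed

lemma occurrences_eq_image_block_start:
  assumes "P \<noteq> []" "P ! 0 = marker g" "\<And>j. bstart j \<in> occurrences x P \<longleftrightarrow> j \<in> occurrences x' s"
  shows "occurrences x P = bstart ` occurrences x' s"
proof safe
  fix i assume i: "i \<in> occurrences x P"
  then have "x i = marker g" using assms(1,2) mem_occurrences_iff[of i x P] by force
  then obtain j where "i = bstart j" using marker_at_block_start by blast
  then show "i \<in> bstart ` occurrences x' s" using i assms(3) by blast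
next
  fix j assume "j \<in> occurrences x' s"
  then show "bstart j \<in> occurrences x P" using assms(3) by blast
qed

lemma block_start_in_occurrences_morph_iff:
  assumes "head_preserving g" "set s \<subseteq> {..1}"
  shows "bstart j \<in> occurrences x (morph (phi_gen g) s) \<longleftrightarrow> j \<in> occurrences x' s"
  using assms(2)
proof (induct s arbitrary: j)
  case (Cons c s)
  have c: "c \<le> 1" using Cons.prems by simp
  show ?case
  proof (cases "x' j = c")
    case True
    then have "bstart j + length (phi_gen g c) = bstart (Suc j)" by (simp add: block_start_Suc)
    then show ?thesis using Cons block_start_in_occurrences[OF image, of j] True
      by (simp add: occurrences_append occurrences_Cons)
  next
    case False
    have "bstart j \<notin> occurrences x (phi_gen g c)"
    proof
      assume "bstart j \<in> occurrences x (phi_gen g c)"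
      then have "x (bstart j) = phi_gen g c ! 0"
        using phi_gen_ne_Nil[of g c] mem_occurrences_iff[of "bstart j" x "phi_gen g c"] by force
      then show False using letter_at_block_start[of j] hd_phi_gen[OF c, of g] assms(1) False by simp
    qed
    then show ?thesis using False by (simp add: occurrences_append occurrences_Cons)
  qed
qed simp

lemma hd_morph_snoc_marker:
  assumes "\<not> head_preserving g"
  shows "(morph (phi_gen g) s @ [marker g]) ! 0 = marker g"
proof (cases s)
  case (Cons c s')
  have "phi_gen g c ! 0 = marker g" using assms by (cases g) (auto simp: head_preserving_def marker_def)
  then show ?thesis using Cons phi_gen_ne_Nil[of g c] by (simp add: nth_append)
qed simp

lemma block_start_not_in_occurrences_mismatch:
  assumes "\<not> head_preserving g" "c \<le> 1" "x' j \<noteq> c"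
  shows "bstart j \<notin> occurrences x (phi_gen g c @ [marker g])"
proof
  assume occ: "bstart j \<in> occurrences x (phi_gen g c @ [marker g])"
  have lens: "length (phi_gen g c) + length (phi_gen g (x' j)) = 3"
    using length_phi_gen[OF assms(2), of g] length_phi_gen[OF letter_le_1, of g j] assms
      marker_le_1[of g] letter_le_1[of j] by auto
  show False
  proof (cases "length (phi_gen g c) = 1")
    case True
    then have "phi_gen g c = [marker g]" using phi_gen_length_1[OF assms(2) True] assms(1) by simp
    then have "x (Suc (bstart j)) = marker g" using occ by (simp add: occurrences_Cons)
    moreover have "phi_gen g (x' j) = [marker g, 1 - marker g]"
      using lens True phi_gen_length_2 by simp
    then have "x (Suc (bstart j)) = 1 - marker g" using is_image_nth_block[OF image, of 1 j] by simp
    ultimately show False using marker_le_1[of g] by arith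
  next
    case False
    then have "length (phi_gen g c) = 2"
      using lens length_phi_gen_le_2[of g c] length_phi_gen_le_2[of g "x' j"] by linarith
    then have "phi_gen g c = [marker g, 1 - marker g]" by (rule phi_gen_length_2)
    then have "x (Suc (bstart j)) = 1 - marker g" using occ by (simp add: occurrences_Cons)
    moreover have "length (phi_gen g (x' j)) = 1"
      using lens False length_phi_gen_le_2[of g c] length_phi_gen_le_2[of g "x' j"] by linarith
    then have "Suc (bstart j) = bstart (Suc j)" by (simp add: block_start_Suc)
    then have "x (Suc (bstart j)) = marker g" using letter_at_block_start[of "Suc j"] assms(1) by simp
    ultimately show False using marker_le_1[of g] by arith
  qed
qed

lemma block_start_in_occurrences_morph_snoc_iff:
  assumes "\<not> head_preserving g" "set s \<subseteq> {..1}"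
  shows "bstart j \<in> occurrences x (morph (phi_gen g) s @ [marker g]) \<longleftrightarrow> j \<in> occurrences x' s"
  using assms(2)
proof (induct s arbitrary: j)
  case Nil
  then show ?case using letter_at_block_start[of j] assms(1) by (simp add: mem_occurrences_iff)
next
  case (Cons c s)
  have c: "c \<le> 1" using Cons.prems by simp
  show ?case
  proof (cases "x' j = c")
    case True
    then have "bstart j + length (phi_gen g c) = bstart (Suc j)" by (simp add: block_start_Suc)
    then show ?thesis using Cons block_start_in_occurrences[OF image, of j] True
      by (simp add: occurrences_append occurrences_Cons)
  next
    case False
    have "bstart j \<notin> occurrences x (phi_gen g c @ (morph (phi_gen g) s @ [marker g]))"
    proof
      assume occ: "bstart j \<in> occurrences x (phi_gen g c @ (morph (phi_gen g) s @ [marker g]))"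
      then have "bstart j + length (phi_gen g c) \<in> occurrences x (morph (phi_gen g) s @ [marker g])"
        by (simp add: occurrences_append)
      then have "x (bstart j + length (phi_gen g c)) = marker g"
        using hd_morph_snoc_marker[OF assms(1), of s]
          mem_occurrences_iff[of _ x "morph (phi_gen g) s @ [marker g]"] by force
      then have "bstart j \<in> occurrences x (phi_gen g c @ [marker g])"
        using occ by (simp add: occurrences_append occurrences_Cons)
      then show False using block_start_not_in_occurrences_mismatch[OF assms(1) c False] by simp
    qed
    then show ?thesis using False by (simp add: occurrences_append occurrences_Cons)
  qed
qed

lemma occurrences_morph_pref_head_preserving:
  assumes "head_preserving g" "x' 0 = marker g" "0 < j"
  shows "occurrences x (morph (phi_gen g) (pref x' j)) = bstart ` occurrences x' (pref x' j)"
proof (rule occurrences_eq_image_block_start)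
  have "pref x' j \<noteq> []" using assms(3) by (simp add: pref_def)
  then show "morph (phi_gen g) (pref x' j) \<noteq> []" by (rule morph_phi_gen_ne_Nil)
  show "morph (phi_gen g) (pref x' j) ! 0 = marker g"
    using nth_morph_0[OF \<open>pref x' j \<noteq> []\<close> phi_gen_ne_Nil] hd_phi_gen[OF letter_le_1, of g 0] assms
    by simp
  show "bstart i \<in> occurrences x (morph (phi_gen g) (pref x' j)) \<longleftrightarrow> i \<in> occurrences x' (pref x' j)" for i
    by (rule block_start_in_occurrences_morph_iff[OF assms(1) set_pref_binary[OF binary]])
qed

lemma occurrences_morph_pref_snoc_marker:
  assumes "\<not> head_preserving g"
  shows "occurrences x (morph (phi_gen g) (pref x' j) @ [marker g]) = bstart ` occurrences x' (pref x' j)"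
  by (rule occurrences_eq_image_block_start)
    (simp_all add: hd_morph_snoc_marker[OF assms]
      block_start_in_occurrences_morph_snoc_iff[OF assms set_pref_binary[OF binary]])

lemma desubstitute_head_preserving:
  assumes "head_preserving g" "p \<noteq> []" "p = pref x (length p)" "x 0 = marker g"
  obtains j where "0 < j" "j \<le> length p" "occurrences x p = bstart ` occurrences x' (pref x' j)"
proof -
  obtain j q where q: "q < length (phi_gen g (x' j))"
    and p: "p = morph (phi_gen g) (pref x' j) @ take q (phi_gen g (x' j))"
    using pref_image_decomposition[OF image nonerasing_phi_gen] assms(3) by metis
  have x'0: "x' 0 = marker g" using letter_at_block_start[of 0] assms(1,4) by simp
  have j_le: "j \<le> length (morph (phi_gen g) (pref x' j))"
    using length_le_length_morph[OF nonerasing_phi_gen, of "pref x' j"] by simp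
  show ?thesis
  proof (cases "q = 0")
    case True
    then have p: "p = morph (phi_gen g) (pref x' j)" using p by simp
    then have "0 < j" using assms(2) by (cases j) auto
    then show ?thesis using occurrences_morph_pref_head_preserving[OF assms(1) x'0] p j_le
      by (intro that[of j]) simp_all
  next
    case False
    then have two: "length (phi_gen g (x' j)) = 2" using q length_phi_gen_le_2[of g "x' j"] by linarith
    then have block: "phi_gen g (x' j) = [marker g, 1 - marker g]" by (rule phi_gen_length_2)
    have "q = 1" using False q two by linarith
    then have p: "p = morph (phi_gen g) (pref x' j) @ [marker g]" using p block by simp
    \<comment> \<open>\<open>p\<close> ends inside a block, whose second letter is forced\<close>
    have "occurrences x p = occurrences x (p @ [1 - marker g])"
      by (rule occurrences_snoc_forced[OF assms(2), symmetric])
        (simp add: p marker_followed_by_other[OF assms(1)])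
    also have "p @ [1 - marker g] = morph (phi_gen g) (pref x' (Suc j))"
      using p block by (simp add: pref_Suc)
    finally show ?thesis
      using occurrences_morph_pref_head_preserving[OF assms(1) x'0, of "Suc j"] p j_le
      by (intro that[of "Suc j"]) simp_all
  qed
qed

lemma desubstitute_not_head_preserving:
  assumes "\<not> head_preserving g" "p \<noteq> []" "p = pref x (length p)"
  obtains j where "j < length p" "occurrences x p = bstart ` occurrences x' (pref x' j)"
proof -
  obtain j q where q: "q < length (phi_gen g (x' j))"
    and p: "p = morph (phi_gen g) (pref x' j) @ take q (phi_gen g (x' j))"
    using pref_image_decomposition[OF image nonerasing_phi_gen] assms(3) by metis
  have le: "i \<le> length (morph (phi_gen g) (pref x' i))" for i
    using length_le_length_morph[OF nonerasing_phi_gen, of "pref x' i"] by simp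
  show ?thesis
  proof (cases "q = 0")
    case False
    have "take 1 (phi_gen g (x' j)) = [marker g]"
      using hd_phi_gen[OF letter_le_1, of g j] assms(1) phi_gen_ne_Nil[of g "x' j"]
      by (cases "phi_gen g (x' j)") auto
    moreover have "q = 1" using False q length_phi_gen_le_2[of g "x' j"] by linarith
    ultimately have p: "p = morph (phi_gen g) (pref x' j) @ [marker g]" using p by simp
    then show ?thesis using occurrences_morph_pref_snoc_marker[OF assms(1)] le[of j]
      by (intro that[of j]) simp_all
  next
    case True
    then have p: "p = morph (phi_gen g) (pref x' j)" using p by simp
    then obtain j0 where j: "j = Suc j0" using assms(2) by (cases j) auto
    have p0: "p = morph (phi_gen g) (pref x' j0) @ phi_gen g (x' j0)" using p j by (simp add: pref_Suc)
    show ?thesis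
    proof (cases "x' j0 = marker g")
      case True
      then have one: "length (phi_gen g (x' j0)) = 1"
        using length_phi_gen[OF letter_le_1, of g j0] assms(1) by simp
      have "phi_gen g (x' j0) = [marker g]" using phi_gen_length_1[OF letter_le_1 one] assms(1) by simp
      then show ?thesis using p0 occurrences_morph_pref_snoc_marker[OF assms(1), of j0] le[of j0]
        by (intro that[of j0]) simp_all
    next
      case False
      then have "length (phi_gen g (x' j0)) = 2" using length_phi_gen[OF letter_le_1] assms(1) by simp
      then have p0: "p = morph (phi_gen g) (pref x' j0) @ [marker g, 1 - marker g]"
        using p0 phi_gen_length_2 by simp
      \<comment> \<open>the block \<open>marker g, 1 - marker g\<close> is always followed by a new block\<close>
      have "occurrences x p = occurrences x (p @ [marker g])"
        by (rule occurrences_snoc_forced[OF assms(2), symmetric])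
          (simp add: p0 other_followed_by_marker[OF assms(1)])
      also have "\<dots> = bstart ` occurrences x' (pref x' j)"
        using p occurrences_morph_pref_snoc_marker[OF assms(1)] by simp
      finally show ?thesis using p0 j le[of j0] by (intro that[of j]) simp_all
    qed
  qed
qed

end


section \<open>Composite morphisms and conjugation\<close>

lemma phi_word_ne_Nil: "phi_word v c \<noteq> []"
  by (induct v arbitrary: c) (auto simp: morph_phi_gen_ne_Nil)

lemma nonerasing_phi_word: "nonerasing (phi_word v)"
  by (simp add: nonerasing_def phi_word_ne_Nil)

lemma phi_word_binary: "c \<le> 1 \<Longrightarrow> a \<in> set (phi_word v c) \<Longrightarrow> a \<le> 1"
proof (induct v arbitrary: a)
  case (Cons g v)
  then show ?case using set_morph phi_gen_binary by fastforce
qed simp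

lemma hd_morph_phi_gen_phi_word: "morph (phi_gen g) (phi_word v c) ! 0 = phi_gen g (phi_word v c ! 0) ! 0"
  by (rule nth_morph_0[OF phi_word_ne_Nil phi_gen_ne_Nil])

lemma hd_phi_word_head_preserving:
  "\<forall>g\<in>set v. head_preserving g \<Longrightarrow> c \<le> 1 \<Longrightarrow> phi_word v c ! 0 = c"
  by (induct v) (simp_all add: hd_morph_phi_gen_phi_word hd_phi_gen)

lemma hd_phi_word_uniform_marker:
  assumes "\<forall>g\<in>set v. marker g = d" "\<exists>g\<in>set v. \<not> head_preserving g" "c \<le> 1"
  shows "phi_word v c ! 0 = d"
  using assms(1,2)
proof (induct v)
  case (Cons g v)
  have "phi_word v c ! 0 \<le> 1"
    using phi_word_binary[OF assms(3)] phi_word_ne_Nil[of v c] by (metis nth_mem length_greater_0_conv)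
  then show ?case using Cons hd_phi_gen[of "phi_word v c ! 0" g] by (auto simp: hd_morph_phi_gen_phi_word)
qed simp

lemma is_image_Cons_split:
  assumes "is_image (phi_word (g # v)) z y"
  shows "is_image (phi_word v) z (image_word (phi_word v) z)"
    and "is_image (phi_gen g) (image_word (phi_word v) z) y"
proof -
  show im: "is_image (phi_word v) z (image_word (phi_word v) z)"
    by (rule is_image_image_word[OF nonerasing_phi_word])
  have "is_image (phi_gen g) (image_word (phi_word v) z)
      (image_word (phi_gen g) (image_word (phi_word v) z))"
    by (rule is_image_image_word[OF nonerasing_phi_gen])
  moreover have "is_image (phi_word (g # v)) z (image_word (phi_gen g) (image_word (phi_word v) z))"
    using is_image_comp[OF im calculation] by (simp add: phi_word_Cons_eq)
  then have "image_word (phi_gen g) (image_word (phi_word v) z) = y"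
    by (rule is_image_unique[OF _ assms nonerasing_phi_word])
  ultimately show "is_image (phi_gen g) (image_word (phi_word v) z) y" by simp
qed

lemma fixed_point_Cons_image:
  assumes "fixed_point (phi_word (g # v)) y"
  shows "is_image (phi_gen g) (image_word (phi_word v) y) y"
    and "fixed_point (phi_word (v @ [g])) (image_word (phi_word v) y)"
proof -
  have y: "binary y" "is_image (phi_word (g # v)) y y" using assms by (simp_all add: fixed_point_iff)
  show im: "is_image (phi_gen g) (image_word (phi_word v) y) y"
    by (rule is_image_Cons_split(2)[OF y(2)])
  have "phi_word (v @ [g]) = (\<lambda>c. morph (phi_word v) (phi_gen g c))"
    by (rule ext) (simp add: phi_word_snoc)
  then have "is_image (phi_word (v @ [g])) (image_word (phi_word v) y) (image_word (phi_word v) y)"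
    using is_image_comp[OF im is_image_Cons_split(1)[OF y(2)]] by simp
  moreover have "binary (image_word (phi_word v) y)"
    by (rule binary_image_word[OF y(1) phi_word_binary nonerasing_phi_word])
  ultimately show "fixed_point (phi_word (v @ [g])) (image_word (phi_word v) y)"
    by (simp add: fixed_point_iff)
qed

text \<open>For \<open>c = 1 - marker g\<close> we have \<open>\<phi>\<^sub>g(c) = c\<close> and \<open>\<phi>\<^sub>g'(w) c = c \<phi>\<^sub>g(w)\<close> for the conjugate
  \<open>g'\<close>, so dropping the first letter \<open>c\<close> of \<open>y'\<close> turns \<open>\<phi>\<^sub>g\<close> into \<open>\<phi>\<^sub>g'\<close>.\<close>

lemma is_image_conj_gen_tl:
  assumes hp: "head_preserving g" and im: "is_image (phi_gen g) y' y" and y'0: "y' 0 = 1 - marker g"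
  shows "is_image (phi_gen (conj_gen g)) (\<lambda>n. y' (Suc n)) y"
  unfolding is_image_def
proof
  fix j
  let ?t = "\<lambda>n. y' (Suc n)"
  have "1 - marker g \<noteq> marker g" using marker_le_1[of g] by arith
  then have "phi_gen g (1 - marker g) = [1 - marker g]"
    using phi_gen_length_1[of "1 - marker g" g] length_phi_gen[of "1 - marker g" g] hp by auto
  then have "morph (phi_gen (conj_gen g)) (pref ?t j) @ [1 - marker g]
      = morph (phi_gen g) (pref y' (Suc j))"
    using morph_conj_gen_snoc[OF hp, of "pref ?t j"] y'0 by (simp add: pref_Suc_Cons)
  also have "\<dots> = pref y (length (morph (phi_gen g) (pref y' (Suc j))))" by (rule is_image_pref[OF im])
  finally show "morph (phi_gen (conj_gen g)) (pref ?t j)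
      = pref y (length (morph (phi_gen (conj_gen g)) (pref ?t j)))"
    by (metis pref_eq_appendD)
qed

text \<open>Pushing a leading letter \<open>c\<close> through \<open>\<phi>\<^sub>g\<close> replaces \<open>g\<close> by its conjugate exactly when
  \<open>\<phi>\<^sub>g(c)\<close> has two letters.\<close>

definition shift_gen :: "nat \<Rightarrow> gen \<Rightarrow> gen" where
  "shift_gen c g = (if marker g = c then conj_gen g else g)"

lemma is_image_phi_gen_tl:
  assumes hp: "head_preserving g" and im: "is_image (phi_gen g) z y" and "z 0 = c" "c \<le> 1"
  shows "is_image (phi_gen (shift_gen c g)) (\<lambda>n. z (Suc n)) (\<lambda>n. y (Suc n))"
  unfolding is_image_def
proof
  fix j
  let ?t = "\<lambda>n. z (Suc n)" and ?g = "shift_gen c g"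
  let ?e = "if marker g = c then [1 - marker g] else []"
  obtain L where L: "morph (phi_gen g) (pref z (Suc j)) = pref y L"
    using is_image_pref[OF im] by metis
  have z: "morph (phi_gen g) (pref z (Suc j)) = phi_gen g c @ morph (phi_gen g) (pref ?t j)"
    using assms(3) by (simp add: pref_Suc_Cons)
  have "tl (morph (phi_gen g) (pref z (Suc j))) = morph (phi_gen ?g) (pref ?t j) @ ?e"
  proof (cases "marker g = c")
    case True
    then have "phi_gen g c = [marker g, 1 - marker g]"
      using length_phi_gen[OF assms(4), of g] hp phi_gen_length_2[of g c] by simp
    then show ?thesis using True morph_conj_gen_snoc[OF hp, of "pref ?t j"] z by (simp add: shift_gen_def)
  next
    case False
    then have "phi_gen g c = [c]"
      using phi_gen_length_1[OF assms(4), of g] length_phi_gen[OF assms(4), of g] hp by simp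
    then show ?thesis using False z by (simp add: shift_gen_def)
  qed
  moreover have "tl (pref y L) = pref (\<lambda>k. y (Suc k)) (L - 1)"
    by (cases L) (simp_all add: pref_Suc_Cons)
  ultimately have "pref (\<lambda>k. y (Suc k)) (L - 1) = morph (phi_gen ?g) (pref ?t j) @ ?e"
    using L by simp
  then show "morph (phi_gen ?g) (pref ?t j)
      = pref (\<lambda>k. y (Suc k)) (length (morph (phi_gen ?g) (pref ?t j)))"
    by (metis pref_eq_appendD)
qed

lemma is_image_phi_word_tl:
  assumes "\<forall>g\<in>set v. head_preserving g" "is_image (phi_word v) z y" "z 0 = c" "c \<le> 1"
  shows "is_image (phi_word (map (shift_gen c) v)) (\<lambda>n. z (Suc n)) (\<lambda>n. y (Suc n))"
  using assms(1,2)
proof (induct v arbitrary: y)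
  case Nil
  then show ?case by (simp add: phi_word_Nil_eq is_image_id_iff)
next
  case (Cons g v)
  let ?y' = "image_word (phi_word v) z"
  have im: "is_image (phi_word v) z ?y'" "is_image (phi_gen g) ?y' y"
    using is_image_Cons_split[OF Cons.prems(2)] by simp_all
  have "?y' 0 = c"
    using hd_is_image[OF im(1) nonerasing_phi_word] hd_phi_word_head_preserving[OF _ assms(4)]
      Cons.prems(1) assms(3) by simp
  then have "is_image (phi_gen (shift_gen c g)) (\<lambda>n. ?y' (Suc n)) (\<lambda>n. y (Suc n))"
    using is_image_phi_gen_tl[OF _ im(2) _ assms(4)] Cons.prems(1) by simp
  then show ?case
    using is_image_comp[OF Cons.hyps[OF _ im(1)]] Cons.prems(1) by (simp add: phi_word_Cons_eq)
qed

section \<open>Derived sequences of fixed points\<close>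

definition derived_fixed_by_conjugate :: "gen list \<Rightarrow> (nat \<Rightarrow> nat) \<Rightarrow> nat list \<Rightarrow> bool" where
  "derived_fixed_by_conjugate v x p \<longleftrightarrow>
     (\<exists>k z. fixed_point (phi_word ((cyc ^^ k) v)) z \<and> codes_derived x p z)"

lemma derived_fixed_by_conjugate_Nil:
  "fixed_point (phi_word v) x \<Longrightarrow> derived_fixed_by_conjugate v x []"
  unfolding derived_fixed_by_conjugate_def using codes_derived_Nil by (metis funpow_0)

lemma derived_fixed_by_conjugate_desubstitute:
  assumes "is_image (phi_gen g) x' x" "binary x'"
    and "occurrences x p = block_start (phi_gen g) x' ` occurrences x' p'"
    and "derived_fixed_by_conjugate (cyc v) x' p'"
  shows "derived_fixed_by_conjugate v x p"
proof -
  obtain k z where z: "fixed_point (phi_word ((cyc ^^ k) (cyc v))) z" "codes_derived x' p' z"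
    using assms(4) by (auto simp: derived_fixed_by_conjugate_def)
  have "codes_derived x p z"
    by (rule codes_derived_image[OF assms(1) nonerasing_phi_gen inj_on_binary_phi_gen assms(2,3)
          z(2)])
  moreover have "(cyc ^^ k) (cyc v) = (cyc ^^ Suc k) v"
    by (simp only: funpow_Suc_right o_apply)
  ultimately show ?thesis using z(1) unfolding derived_fixed_by_conjugate_def by metis
qed


text \<open>A desubstitution step moves the first generator to the end. The prefix never grows and
  shrinks strictly at \<open>b\<close> and \<open>\<beta>\<close>, while leading \<open>a\<close>'s and \<open>\<alpha>\<close>'s are used up.\<close>

definition rotation_measure :: "nat list \<Rightarrow> gen list \<Rightarrow> nat" where
  "rotation_measure p v = length p * (length v + 1) + length (takeWhile head_preserving v)"

lemma (in gen_image) desubstitute_rotation_measure: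
  assumes "\<exists>h\<in>set (g # v). \<not> head_preserving h"
    and "p \<noteq> []" "p = pref x (length p)" "x 0 = marker g"
  obtains j where "rotation_measure (pref x' j) (v @ [g]) < rotation_measure p (g # v)"
    "occurrences x p = bstart ` occurrences x' (pref x' j)"
proof (cases "head_preserving g")
  case True
  obtain j where j: "j \<le> length p" "occurrences x p = bstart ` occurrences x' (pref x' j)"
    using desubstitute_head_preserving[OF True assms(2-4)] by blast
  obtain h where "h \<in> set v" "\<not> head_preserving h" using assms(1) True by auto
  then have "takeWhile head_preserving (v @ [g]) = takeWhile head_preserving v" by simp
  moreover have "j * (length v + 2) \<le> length p * (length v + 2)" using j(1) by (rule mult_le_mono1)
  ultimately show ?thesis using j(2) True by (intro that[of j]) (simp_all add: rotation_measure_def)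
next
  case False
  obtain j where j: "j < length p" "occurrences x p = bstart ` occurrences x' (pref x' j)"
    using desubstitute_not_head_preserving[OF False assms(2,3)] by blast
  have "Suc j * (length v + 2) \<le> length p * (length v + 2)" using j(1) by (intro mult_le_mono1) simp
  moreover have "length (takeWhile head_preserving (v @ [g])) \<le> length v + 1"
    using length_takeWhile_le[of head_preserving "v @ [g]"] by simp
  ultimately show ?thesis using j(2) by (intro that[of j]) (simp_all add: rotation_measure_def)
qed

text \<open>When all generators share the marker \<open>d\<close> and one of them is \<open>b\<close> or \<open>\<beta>\<close>, every
  image under the composite starts with \<open>d\<close>, and so does the fixed point: desubstitution
  applies at every step.\<close>

lemma derived_fixed_by_conjugate_uniform_marker:
  assumes "\<forall>g\<in>set v. marker g = d" "\<exists>g\<in>set v. \<not> head_preserving g"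
    and "fixed_point (phi_word v) x" "p = pref x (length p)"
  shows "derived_fixed_by_conjugate v x p"
  using assms
proof (induction "rotation_measure p v" arbitrary: v x p rule: less_induct)
  case less
  show ?case
  proof (cases "p = []")
    case True
    then show ?thesis using derived_fixed_by_conjugate_Nil[OF less.prems(3)] by simp
  next
    case p: False
    obtain g v' where v: "v = g # v'" using less.prems(2) by (cases v) auto
    define x' where "x' = image_word (phi_word v') x"
    have im: "is_image (phi_gen g) x' x" and fix': "fixed_point (phi_word (v' @ [g])) x'"
      using fixed_point_Cons_image less.prems(3) unfolding v x'_def by blast+
    have "binary x'" using fix' by (simp add: fixed_point_iff)
    interpret gen_image g x' x by (rule gen_image.intro[OF im \<open>binary x'\<close>])
    have "x 0 \<le> 1" "is_image (phi_word v) x x"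
      using less.prems(3) by (simp_all add: fixed_point_iff binary_def)
    then have "x 0 = d"
      using hd_is_image[OF _ nonerasing_phi_word] hd_phi_word_uniform_marker[OF less.prems(1,2)]
      by metis
    then have "x 0 = marker g" using less.prems(1) v by simp
    then obtain j where j: "rotation_measure (pref x' j) (v' @ [g]) < rotation_measure p v"
      "occurrences x p = bstart ` occurrences x' (pref x' j)"
      using desubstitute_rotation_measure[of v' p] less.prems(2,4) p v by blast
    have "derived_fixed_by_conjugate (v' @ [g]) x' (pref x' j)"
      using less.hyps[OF j(1)] less.prems(1,2) fix' v by auto
    then show ?thesis
      using derived_fixed_by_conjugate_desubstitute[OF image binary j(2)] v by (simp add: cyc_def)
  qed
qed

text \<open>The step at which the first generator has a marker different from the first letter \<open>c\<close>:
  dropping \<open>c\<close> conjugates the remaining morphisms into ones with the common marker \<open>1 - c\<close>.\<close>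

lemma derived_fixed_by_conjugate_marker_switch:
  assumes "\<forall>h\<in>set v. head_preserving h" "\<exists>h\<in>set v. marker h = c" "c \<le> 1"
    and "head_preserving g" "marker g \<noteq> c"
    and "is_image (phi_gen g) y' y" "fixed_point (phi_word (v @ [g])) y'" "y' 0 = c"
    and "p \<noteq> []" "p = pref y (length p)"
  shows "derived_fixed_by_conjugate (map (shift_gen c) (g # v)) y p"
proof -
  let ?t = "\<lambda>n. y' (Suc n)" and ?w = "map (shift_gen c) (v @ [g])"
  have marker_g: "marker g = 1 - c" using assms(3,5) marker_le_1[of g] by arith
  have im: "is_image (phi_gen (conj_gen g)) ?t y"
    using is_image_conj_gen_tl[OF assms(4,6)] assms(3,8) marker_g by simp
  have y': "binary y'" "is_image (phi_word (v @ [g])) y' y'"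
    using assms(7) by (simp_all add: fixed_point_iff)
  then have bin: "binary ?t" by (simp add: binary_def)
  interpret gen_image "conj_gen g" ?t y by (rule gen_image.intro[OF im bin])
  obtain j where occ: "occurrences y p = bstart ` occurrences ?t (pref ?t j)"
    using desubstitute_not_head_preserving[OF not_head_preserving_conj_gen assms(9,10)] by blast
  have "is_image (phi_word ?w) ?t ?t"
    using is_image_phi_word_tl[OF _ y'(2) assms(8,3)] assms(1,4) by simp
  then have fixed: "fixed_point (phi_word ?w) ?t" using bin by (simp add: fixed_point_iff)
  have "marker (shift_gen c h) = 1 - c" if "head_preserving h" for h
  proof (cases "marker h = c")
    case True
    then show ?thesis by (simp add: shift_gen_def marker_conj_gen[OF that])
  next
    case False
    then show ?thesis using marker_le_1[of h] assms(3) by (simp add: shift_gen_def)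
  qed
  then have uniform: "\<forall>h\<in>set ?w. marker h = 1 - c" using assms(1,4) by auto
  have "\<exists>h\<in>set ?w. \<not> head_preserving h"
    using assms(2) not_head_preserving_conj_gen by (fastforce simp: shift_gen_def)
  then have "derived_fixed_by_conjugate ?w ?t (pref ?t j)"
    using derived_fixed_by_conjugate_uniform_marker[OF uniform _ fixed] by simp
  then show ?thesis
    using derived_fixed_by_conjugate_desubstitute[OF image binary occ] by (simp add: cyc_def)
qed

lemma derived_fixed_by_conjugate_shift_gen:
  assumes "\<forall>g\<in>set v. head_preserving g"
    and "\<exists>g\<in>set v. marker g = c" "\<exists>g\<in>set v. marker g \<noteq> c"
    and "fixed_point (phi_word v) y" "y 0 = c" "p \<noteq> []" "p = pref y (length p)"
  shows "derived_fixed_by_conjugate (map (shift_gen c) v) y p"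
  using assms
proof (induction "length (takeWhile (\<lambda>g. marker g = c) v)" arbitrary: v y p rule: less_induct)
  case less
  obtain g v' where v: "v = g # v'" using less.prems(2) by (cases v) auto
  define y' where "y' = image_word (phi_word v') y"
  have im: "is_image (phi_gen g) y' y" and fix': "fixed_point (phi_word (v' @ [g])) y'"
    using fixed_point_Cons_image less.prems(4) unfolding v y'_def by blast+
  have "binary y'" using fix' by (simp add: fixed_point_iff)
  interpret gen_image g y' y by (rule gen_image.intro[OF im \<open>binary y'\<close>])
  have hp: "head_preserving g" using less.prems(1) v by simp
  have c: "c \<le> 1" using less.prems(4,5) by (auto simp: fixed_point_iff binary_def)
  have y'0: "y' 0 = c" using letter_at_block_start[of 0] hp less.prems(5) by simp
  show ?case
  proof (cases "marker g = c")
    case True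
    obtain j where j: "0 < j" "occurrences y p = bstart ` occurrences y' (pref y' j)"
      using desubstitute_head_preserving[OF hp less.prems(6,7)] True less.prems(5) by metis
    obtain h where "h \<in> set v'" "marker h \<noteq> c" using less.prems(3) v True by auto
    then have "takeWhile (\<lambda>g. marker g = c) (v' @ [g]) = takeWhile (\<lambda>g. marker g = c) v'" by simp
    then have "derived_fixed_by_conjugate (map (shift_gen c) (v' @ [g])) y' (pref y' j)"
      using less.hyps[of "v' @ [g]"] less.prems(1-3) v True fix' y'0 j(1) by (auto simp: pref_def)
    then show ?thesis using derived_fixed_by_conjugate_desubstitute[OF image binary j(2)] v
      by (simp add: cyc_def)
  next
    case False
    have "\<exists>h\<in>set v'. marker h = c" using less.prems(2) v False by auto
    then show ?thesis
      using derived_fixed_by_conjugate_marker_switch[OF _ _ c hp False im fix' y'0 less.prems(6,7)]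
        less.prems(1) v by simp
  qed
qed

lemma primitive_head_preserving_contains_both:
  assumes "set w \<subseteq> {GA, GAl}" "primitive (phi_word w)"
  shows "GA \<in> set w" "GAl \<in> set w"
proof -
  obtain k where k: "\<forall>c\<in>{0,1::nat}. \<forall>d\<in>{0,1::nat}. d \<in> set (((morph (phi_word w)) ^^ k) [c])"
    using assms(2) by (auto simp: primitive_def)
  have fixed_letter: "(morph (phi_word w) ^^ n) [c] = [c]" if "phi_word w c = [c]" for c n
    by (induct n) (simp_all add: that)
  show "GA \<in> set w"
  proof (rule ccontr)
    assume "GA \<notin> set w"
    then have "\<forall>g\<in>set w. g = GAl" using assms(1) by auto
    then have "phi_word w 1 = [1]" by (induct w) auto
    then show False using k fixed_letter by fastforce
  qed
  show "GAl \<in> set w"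
  proof (rule ccontr)
    assume "GAl \<notin> set w"
    then have "\<forall>g\<in>set w. g = GA" using assms(1) by auto
    then have "phi_word w 0 = [0]" by (induct w) auto
    then show False using k fixed_letter by fastforce
  qed
qed

lemma map_shift_gen_0: "set w \<subseteq> {GA, GAl} \<Longrightarrow> map (shift_gen 0) w = map F w"
  by (auto intro!: map_cong simp: shift_gen_def marker_def conj_gen_def F_def)

lemma map_shift_gen_1: "set w \<subseteq> {GA, GAl} \<Longrightarrow> map (shift_gen 1) w = map H w"
  by (auto intro!: map_cong simp: shift_gen_def marker_def conj_gen_def H_def)

lemma derived_fixed_by_if_codes_derived:
  assumes "codes_derived u p z" "fixed_point f z"
  shows "derived_fixed_by u p f"
proof -
  define \<sigma> where "\<sigma> = (\<lambda>s. z (SOME n. return_seq u p n = s))"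
  have ret: "return_seq u p n = return_seq u p m \<longleftrightarrow> z n = z m" for n m
    using assms(1) by (simp add: codes_derived_def)
  have \<sigma>: "\<sigma> (return_seq u p n) = z n" for n
    unfolding \<sigma>_def using someI[of "\<lambda>m. return_seq u p m = return_seq u p n" n] ret by blast
  have "inj_on \<sigma> (range (return_seq u p))" by (auto simp: inj_on_def \<sigma> ret)
  moreover have "(\<lambda>n. \<sigma> (return_seq u p n)) = z" by (simp add: \<sigma>)
  ultimately show ?thesis using assms(2) unfolding derived_fixed_by_def by metis
qed

lemma derived_fixed_by_conjugate_imp_Cset:
  assumes "derived_fixed_by_conjugate v u p"
  shows "\<exists>f\<in>Cset v. derived_fixed_by u p f"
  using assms derived_fixed_by_if_codes_derived
  unfolding derived_fixed_by_conjugate_def Cset_def by blast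

theorem corollary31:
  fixes w :: "gen list" and u :: "nat \<Rightarrow> nat" and p :: "nat list"
  assumes "set w \<subseteq> {GA, GAl}"
    and "primitive (phi_word w)"
    and "fixed_point (phi_word w) u"
    and "p \<noteq> []" and "p = pref u (length p)"
  shows "\<exists>f \<in> Cset (map F w) \<union> Cset (map H w). derived_fixed_by u p f"
proof -
  have c: "u 0 \<le> 1" using assms(3) by (simp add: fixed_point_iff binary_def)
  have "GA \<in> set w" "GAl \<in> set w" using primitive_head_preserving_contains_both[OF assms(1,2)] .
  moreover have "marker GA = 1" "marker GAl = 0" by (simp_all add: marker_def)
  moreover have c01: "u 0 = 0 \<or> u 0 = 1" using c by arith
  ultimately have "\<exists>g\<in>set w. marker g = u 0" "\<exists>g\<in>set w. marker g \<noteq> u 0"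
    by (metis zero_neq_one)+
  moreover have "\<forall>g\<in>set w. head_preserving g" using assms(1) by (auto simp: head_preserving_def)
  ultimately have "derived_fixed_by_conjugate (map (shift_gen (u 0)) w) u p"
    using derived_fixed_by_conjugate_shift_gen assms(3-5) by blast
  then obtain f where "f \<in> Cset (map (shift_gen (u 0)) w)" "derived_fixed_by u p f"
    using derived_fixed_by_conjugate_imp_Cset by blast
  moreover have "map (shift_gen (u 0)) w = map F w \<or> map (shift_gen (u 0)) w = map H w"
    using c01 map_shift_gen_0[OF assms(1)] map_shift_gen_1[OF assms(1)] by auto
  ultimately show ?thesis by (metis UnCI)
qed

end
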